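(* Fix $\Delta>1$. Consider a matrix $M\in\mathbb{F}_2^{m\times n}$ that can be used for $\Delta$-approximation of $d=\|\mathbf{x}\|_0$ in the group testing model with only the trivial upper bound $D=n$ on $d$ (i.e. for all $\mathbf{x}\in\mathbb{F}_2^n$). Then for large $n$ it is necessary that $$m\ge n\left(h\!\left(\frac{1}{\Delta^4}\right)-\frac{1}{\Delta^2}h\!\left(\frac{1}{\Delta^2}\right)\right)=\Omega(n),$$ where $h$ is the binary entropy function.
   Context: $\|\mathbf{x}\|_0$ is the number of nonzero entries of $\mathbf{x}$. Group testing model: $(M\odot\mathbf{x})_i=\bigvee_{j:M_{ij}=1}\mathbf{x}_j$. $M$ can be used for $\Delta$-approximation if some deterministic decoder, given only $M\odot\mathbf{x}$, outputs $\hat d$ with $\frac1\Delta\le\hat d/d\le\Delta$ for every admissible $\mathbf{x}$. $h(x)=-x\log_2 x-(1-x)\log_2(1-x)$. *)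

theory Defs
  imports Complex_Main
begin

definition bin_entropy :: "real \<Rightarrow> real" where
  "bin_entropy x = - x * log 2 x - (1 - x) * log 2 (1 - x)"

text \<open>An m x n matrix over F2 is a boolean function on indices (i < m, j < n);
  a vector x in F2^n is a boolean function, only entries j < n matter.\<close>

definition gt_outcome :: "nat \<Rightarrow> nat \<Rightarrow> (nat \<Rightarrow> nat \<Rightarrow> bool) \<Rightarrow> (nat \<Rightarrow> bool) \<Rightarrow> (nat \<Rightarrow> bool)" where
  "gt_outcome m n M x = (\<lambda>i. i < m \<and> (\<exists>j<n. M i j \<and> x j))"

definition hweight :: "nat \<Rightarrow> (nat \<Rightarrow> bool) \<Rightarrow> nat" where
  "hweight n x = card {j. j < n \<and> x j}"

text \<open>M can be used for Delta-approximation of the number of nonzero entries,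
  for all x in F2^n (trivial upper bound D = n); the ratio condition is only
  meaningful for d > 0.\<close>
definition delta_approx :: "real \<Rightarrow> nat \<Rightarrow> nat \<Rightarrow> (nat \<Rightarrow> nat \<Rightarrow> bool) \<Rightarrow> bool" where
  "delta_approx \<Delta> m n M \<longleftrightarrow>
     (\<exists>dec :: (nat \<Rightarrow> bool) \<Rightarrow> real. \<forall>x. hweight n x > 0 \<longrightarrow>
        1 / \<Delta> \<le> dec (gt_outcome m n M x) / real (hweight n x) \<and>
        dec (gt_outcome m n M x) / real (hweight n x) \<le> \<Delta>)"

end

theory Submission imports Defs begin

text \<open>Put \<open>t = \<Delta>\<^sup>2\<close>, \<open>\<mu> = t / (t - 1)\<close> and give every nonempty \<open>B \<subseteq> {..<n}\<close> the weight \<open>q ^ card B\<close>,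
  where \<open>q * \<mu> powr t = \<mu> - 1\<close>; the total weight is \<open>(1 + q) ^ n - 1\<close>. The sets with a common
  outcome form a union-closed family with a largest member \<open>K\<close>, and the decoder forces each member
  to have at least \<open>card K / t\<close> elements; with this \<open>q\<close> the family then weighs at most
  \<open>1 - \<mu> ^ (- card K)\<close>. The outcomes of singletons have \<open>card K \<le> t\<close>, and there are at least
  \<open>n / t\<close> of them, so for \<open>n \<ge> t * \<mu> powr t\<close> their deficits pay for the \<open>-1\<close>:
  \<open>(1 + q) ^ n \<le> #outcomes \<le> 2 ^ m\<close>. Finally \<open>log 2 (1 + q)\<close> dominates the stated entropy
  expression by Gibbs' inequality.\<close>

lemma sum_Pow_power_card:
  fixes a :: "'a :: comm_semiring_1"
  assumes "finite A"
  shows "(\<Sum>B\<in>Pow A. a ^ card B) = (1 + a) ^ card A"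
  using prod_add[OF assms, of "\<lambda>_. a" "\<lambda>_. 1"] by (simp add: add.commute)

lemma Union_mem_if_union_closed:
  assumes "finite G" "G \<noteq> {}" "G \<subseteq> F" and "\<And>A B. A \<in> F \<Longrightarrow> B \<in> F \<Longrightarrow> A \<union> B \<in> F"
  shows "\<Union>G \<in> F"
  using assms by (induction G rule: finite_ne_induct) auto

lemma sum_weight_large_subsets_le:
  fixes \<mu> q t :: real
  assumes mu: "\<mu> > 1" and q: "q \<ge> 0" "q * \<mu> powr t = \<mu> - 1"
    and K: "finite K" and F: "F \<subseteq> Pow K - {{}}"
    and large: "\<And>B. B \<in> F \<Longrightarrow> real (card K) \<le> t * real (card B)"
  shows "(\<Sum>B\<in>F. q ^ card B) \<le> 1 - 1 / \<mu> ^ card K"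
proof -
  have term_le: "q ^ card B * \<mu> ^ card K \<le> (\<mu> - 1) ^ card B" if "B \<in> F" for B
  proof -
    have "\<mu> ^ card K = \<mu> powr real (card K)" using mu by (simp add: powr_realpow)
    also have "\<dots> \<le> \<mu> powr (t * real (card B))" using large[OF that] mu by (intro powr_mono) auto
    also have "\<dots> = (\<mu> powr t) ^ card B" using mu by (subst powr_realpow[symmetric]) (simp_all add: powr_powr)
    finally have "q ^ card B * \<mu> ^ card K \<le> q ^ card B * (\<mu> powr t) ^ card B"
      using q by (intro mult_left_mono) auto
    also have "\<dots> = (\<mu> - 1) ^ card B" using q by (simp flip: power_mult_distrib)
    finally show ?thesis .
  qed
  have "(\<Sum>B\<in>F. q ^ card B) * \<mu> ^ card K \<le> (\<Sum>B\<in>F. (\<mu> - 1) ^ card B)"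
    unfolding sum_distrib_right using term_le by (intro sum_mono) auto
  also have "\<dots> \<le> (\<Sum>B\<in>Pow K - {{}}. (\<mu> - 1) ^ card B)"
    using F K mu by (intro sum_mono2) auto
  also have "\<dots> = \<mu> ^ card K - 1"
    using K sum_Pow_power_card[OF K, of "\<mu> - 1"] by (simp add: sum_diff1)
  finally show ?thesis using mu by (simp add: field_simps)
qed

text \<open>Abstracts a group testing scheme over the items \<open>X\<close> whose decoder approximates the
  number of positives within a factor \<open>\<surd>t\<close>.\<close>

locale ratio_bounded_outcomes =
  fixes X :: "'a set" and oc :: "'a set \<Rightarrow> 'b" and t :: real
  assumes finite_X: "finite X"
    and oc_union: "\<And>A B. oc A = oc B \<Longrightarrow> oc (A \<union> B) = oc A"
    and card_le_ratio: "\<And>A B. \<lbrakk>A \<subseteq> X; B \<subseteq> X; A \<noteq> {}; B \<noteq> {}; oc A = oc B\<rbrakk>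
      \<Longrightarrow> real (card A) \<le> t * real (card B)"
begin

definition fiber :: "'b \<Rightarrow> 'a set set" where
  "fiber y = {B \<in> Pow X - {{}}. oc B = y}"

lemma finite_fiber: "finite (fiber y)"
  using finite_X by (simp add: fiber_def)

lemma Union_fiber_mem:
  assumes "y \<in> oc ` (Pow X - {{}})"
  shows "\<Union>(fiber y) \<in> fiber y"
  using assms finite_fiber oc_union
  by (intro Union_mem_if_union_closed[OF _ _ order_refl]) (auto simp: fiber_def)

lemma sum_weight_fiber_le:
  fixes \<mu> q :: real
  assumes "\<mu> > 1" "q \<ge> 0" "q * \<mu> powr t = \<mu> - 1" and y: "y \<in> oc ` (Pow X - {{}})"
  shows "(\<Sum>B\<in>fiber y. q ^ card B) \<le> 1 - 1 / \<mu> ^ card (\<Union>(fiber y))"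
proof (rule sum_weight_large_subsets_le[OF assms(1-3)])
  have K: "\<Union>(fiber y) \<in> fiber y" by (rule Union_fiber_mem[OF y])
  then show "finite (\<Union>(fiber y))" using finite_X by (auto simp: fiber_def intro: finite_subset)
  show "fiber y \<subseteq> Pow (\<Union>(fiber y)) - {{}}" by (auto simp: fiber_def)
  show "real (card (\<Union>(fiber y))) \<le> t * real (card B)" if "B \<in> fiber y" for B
    using K that by (intro card_le_ratio) (auto simp: fiber_def)
qed

lemma card_Union_fiber_singleton_le:
  assumes "x \<in> X"
  shows "real (card (\<Union>(fiber (oc {x})))) \<le> t"
proof -
  have "\<Union>(fiber (oc {x})) \<in> fiber (oc {x})"
    using assms by (intro Union_fiber_mem) auto
  then show ?thesis
    using card_le_ratio[of "\<Union>(fiber (oc {x}))" "{x}"] assms by (auto simp: fiber_def)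
qed

lemma card_le_singleton_outcomes:
  "real (card X) \<le> t * real (card ((\<lambda>x. oc {x}) ` X))"
proof -
  let ?S = "(\<lambda>x. oc {x}) ` X"
  have "X \<subseteq> (\<Union>y\<in>?S. \<Union>(fiber y))"
  proof
    fix x assume "x \<in> X"
    then have "{x} \<in> fiber (oc {x})" by (simp add: fiber_def)
    with \<open>x \<in> X\<close> show "x \<in> (\<Union>y\<in>?S. \<Union>(fiber y))" by blast
  qed
  moreover have "finite (\<Union>y\<in>?S. \<Union>(fiber y))"
    using finite_X by (auto simp: fiber_def intro: finite_subset)
  ultimately have "card X \<le> card (\<Union>y\<in>?S. \<Union>(fiber y))" by (rule card_mono[rotated])
  also have "\<dots> \<le> (\<Sum>y\<in>?S. card (\<Union>(fiber y)))" using finite_X by (intro card_UN_le) simp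
  finally have "real (card X) \<le> (\<Sum>y\<in>?S. real (card (\<Union>(fiber y))))"
    by (simp flip: of_nat_sum)
  also have "\<dots> \<le> (\<Sum>y\<in>?S. t)" using card_Union_fiber_singleton_le by (intro sum_mono) auto
  finally show ?thesis by (simp add: mult.commute)
qed

lemma power_card_le_card_outcomes:
  fixes \<mu> q :: real
  assumes mu: "\<mu> > 1" and q: "q \<ge> 0" "q * \<mu> powr t = \<mu> - 1"
    and large: "t * \<mu> powr t \<le> real (card X)" and t: "t > 0"
  shows "(1 + q) ^ card X \<le> real (card (oc ` (Pow X - {{}})))"
proof -
  let ?Y = "oc ` (Pow X - {{}})" and ?S = "(\<lambda>x. oc {x}) ` X" and ?c = "1 / \<mu> powr t"
  have SY: "?S \<subseteq> ?Y" by auto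
  have fiber_le: "(\<Sum>B\<in>fiber y. q ^ card B) \<le> 1 - (if y \<in> ?S then ?c else 0)" if "y \<in> ?Y" for y
  proof (cases "y \<in> ?S")
    case True
    then obtain x where "x \<in> X" "y = oc {x}" by blast
    then have "\<mu> ^ card (\<Union>(fiber y)) \<le> \<mu> powr t"
      using card_Union_fiber_singleton_le mu by (simp add: powr_mono flip: powr_realpow)
    then have "?c \<le> 1 / \<mu> ^ card (\<Union>(fiber y))" using mu by (intro divide_left_mono) auto
    then show ?thesis using sum_weight_fiber_le[OF mu q that] True by simp
  next
    case False
    have "0 \<le> 1 / \<mu> ^ card (\<Union>(fiber y))" using mu by simp
    then have "(\<Sum>B\<in>fiber y. q ^ card B) \<le> 1" using sum_weight_fiber_le[OF mu q that] by linarith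
    then show ?thesis using False by simp
  qed
  have "(1 + q) ^ card X - 1 = (\<Sum>B\<in>Pow X - {{}}. q ^ card B)"
    using sum_Pow_power_card[OF finite_X, of q] finite_X by (simp add: sum_diff1)
  also have "\<dots> = (\<Sum>y\<in>?Y. \<Sum>B\<in>fiber y. q ^ card B)"
    unfolding fiber_def using finite_X by (intro sum.image_gen) simp
  also have "\<dots> \<le> (\<Sum>y\<in>?Y. 1 - (if y \<in> ?S then ?c else 0))"
    using fiber_le by (intro sum_mono) auto
  also have "\<dots> = real (card ?Y) - ?c * real (card ?S)"
    using SY finite_X by (simp add: sum_subtractf sum.If_cases Int_absorb2 Int_commute)
  finally have main: "(1 + q) ^ card X - 1 \<le> real (card ?Y) - ?c * real (card ?S)" .
  have "t * \<mu> powr t \<le> t * real (card ?S)"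
    using large card_le_singleton_outcomes by linarith
  then have "1 \<le> ?c * real (card ?S)" using t mu by (simp add: field_simps)
  with main show ?thesis by linarith
qed

end

lemma card_gt_outcome_image_le: "card (gt_outcome m n M ` A) \<le> 2 ^ m"
proof -
  have "card (gt_outcome m n M ` A) \<le> card (Pow {..<m})"
  proof (rule card_inj_on_le[where f = "\<lambda>y. {i. y i}"])
    show "inj_on (\<lambda>y. {i. y i}) (gt_outcome m n M ` A)"
      by (rule inj_onI) (simp add: set_eq_iff fun_eq_iff)
    show "(\<lambda>y. {i. y i}) ` gt_outcome m n M ` A \<subseteq> Pow {..<m}"
      by (auto simp: gt_outcome_def)
  qed simp
  then show ?thesis by (simp add: card_Pow)
qed

lemma delta_approx_ratio_bounded_outcomes:
  assumes "\<Delta> > 0" and "delta_approx \<Delta> m n M"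
  shows "ratio_bounded_outcomes {..<n} (\<lambda>B. gt_outcome m n M (\<lambda>j. j \<in> B)) (\<Delta> ^ 2)"
proof
  obtain dec where dec: "\<And>x. hweight n x > 0 \<Longrightarrow>
      1 / \<Delta> \<le> dec (gt_outcome m n M x) / real (hweight n x) \<and>
      dec (gt_outcome m n M x) / real (hweight n x) \<le> \<Delta>"
    using assms(2) unfolding delta_approx_def by blast
  have hweight: "hweight n (\<lambda>j. j \<in> B) = card B" if "B \<subseteq> {..<n}" for B
    using that by (auto simp: hweight_def intro: arg_cong[where f = card])
  fix A B :: "nat set"
  let ?dec = "\<lambda>B. dec (gt_outcome m n M (\<lambda>j. j \<in> B))"
  assume A: "A \<subseteq> {..<n}" "A \<noteq> {}" and B: "B \<subseteq> {..<n}" "B \<noteq> {}"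
    and eq: "gt_outcome m n M (\<lambda>j. j \<in> A) = gt_outcome m n M (\<lambda>j. j \<in> B)"
  have "card A > 0" "card B > 0" using A B by (auto simp: card_gt_0_iff intro: finite_subset)
  then have "real (card A) \<le> \<Delta> * ?dec A" "?dec B \<le> \<Delta> * real (card B)"
    using dec[of "\<lambda>j. j \<in> A"] dec[of "\<lambda>j. j \<in> B"] hweight A B assms(1)
    by (auto simp: field_simps)
  moreover have "\<Delta> * ?dec B \<le> \<Delta> * (\<Delta> * real (card B))"
    using calculation(2) assms(1) by (intro mult_left_mono) auto
  ultimately show "real (card A) \<le> \<Delta> ^ 2 * real (card B)"
    using eq unfolding power2_eq_square mult.assoc by simp
qed (auto simp: gt_outcome_def fun_eq_iff)

text \<open>Gibbs' inequality for the distributions \<open>(a, 1 - a)\<close> and \<open>(q, 1) / (1 + q)\<close>.\<close>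

lemma bin_entropy_add_mult_log_le:
  fixes a q :: real
  assumes a: "0 < a" "a < 1" and q: "0 < q"
  shows "bin_entropy a + a * log 2 q \<le> log 2 (1 + q)"
proof -
  define x1 where "x1 = q / (a * (1 + q))"
  define x2 where "x2 = 1 / ((1 - a) * (1 + q))"
  have "x1 > 0" "x2 > 0" using assms by (auto simp: x1_def x2_def)
  then have "a * ln x1 + (1 - a) * ln x2 \<le> a * (x1 - 1) + (1 - a) * (x2 - 1)"
    using a ln_le_minus_one by (intro add_mono mult_left_mono) auto
  also have "\<dots> = a * x1 + (1 - a) * x2 - 1" by (simp add: algebra_simps)
  also have "\<dots> = q / (1 + q) + 1 / (1 + q) - 1" using assms by (simp add: x1_def x2_def)
  also have "\<dots> = 0" using q by (simp add: field_simps)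
  finally have "a * ln x1 + (1 - a) * ln x2 \<le> 0" .
  moreover have "ln x1 = ln q - ln a - ln (1 + q)" "ln x2 = - ln (1 - a) - ln (1 + q)"
    using assms by (simp_all add: x1_def x2_def ln_div ln_mult)
  ultimately have "- a * ln a - (1 - a) * ln (1 - a) + a * ln q \<le> ln (1 + q)"
    by (simp add: algebra_simps)
  then have "(- a * ln a - (1 - a) * ln (1 - a) + a * ln q) / ln 2 \<le> ln (1 + q) / ln 2"
    by (simp add: divide_right_mono)
  then show ?thesis unfolding bin_entropy_def log_def by (simp add: add_divide_distrib diff_divide_distrib)
qed

lemma log_weight_eq:
  fixes t :: real
  assumes "t > 1"
  shows "log 2 ((t / (t - 1) - 1) / (t / (t - 1)) powr t) = - t * bin_entropy (1 / t)"
proof -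
  have pos: "t > 0" "t - 1 > 0" using assms by auto
  have "t / (t - 1) - 1 = 1 / (t - 1)" "1 - 1 / t = (t - 1) / t"
    using pos by (simp_all add: field_simps)
  then have "ln ((t / (t - 1) - 1) / (t / (t - 1)) powr t) = - ln (t - 1) - t * (ln t - ln (t - 1))"
    "ln (1 - 1 / t) = ln (t - 1) - ln t"
    using pos by (simp_all add: ln_div ln_mult ln_powr)
  then show ?thesis unfolding bin_entropy_def log_def using pos
    by (simp add: ln_div field_simps)
qed

lemma entropy_difference_le_log_weight:
  fixes t :: real
  assumes "t > 1"
  shows "bin_entropy (1 / t ^ 2) - 1 / t * bin_entropy (1 / t)
    \<le> log 2 (1 + (t / (t - 1) - 1) / (t / (t - 1)) powr t)"
proof -
  have "bin_entropy (1 / t ^ 2) - 1 / t * bin_entropy (1 / t)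
      = bin_entropy (1 / t ^ 2) + 1 / t ^ 2 * log 2 ((t / (t - 1) - 1) / (t / (t - 1)) powr t)"
    using assms by (simp add: log_weight_eq power2_eq_square)
  also have "\<dots> \<le> log 2 (1 + (t / (t - 1) - 1) / (t / (t - 1)) powr t)"
    using assms by (intro bin_entropy_add_mult_log_le) (auto simp: field_simps)
  finally show ?thesis .
qed

theorem corollary1:
  fixes \<Delta> :: real
  assumes "\<Delta> > 1"
  shows "\<exists>N. \<forall>n \<ge> N. \<forall>m M. delta_approx \<Delta> m n M \<longrightarrow>
           real m \<ge> real n * (bin_entropy (1 / \<Delta> ^ 4) - 1 / \<Delta> ^ 2 * bin_entropy (1 / \<Delta> ^ 2))"
proof (intro exI allI impI)
  define t where "t = \<Delta> ^ 2"
  define \<mu> where "\<mu> = t / (t - 1)"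
  define q where "q = (\<mu> - 1) / \<mu> powr t"
  have t: "t > 1" using assms by (simp add: t_def one_less_power)
  then have mu: "\<mu> > 1" and q: "q > 0" "q * \<mu> powr t = \<mu> - 1"
    by (simp_all add: \<mu>_def q_def field_simps)
  fix n m M
  assume "nat \<lceil>t * \<mu> powr t\<rceil> \<le> n" and approx: "delta_approx \<Delta> m n M"
  then have "t * \<mu> powr t \<le> real n" by linarith
  then have large: "t * \<mu> powr t \<le> real (card {..<n})" by simp
  interpret ratio_bounded_outcomes "{..<n}" "\<lambda>B. gt_outcome m n M (\<lambda>j. j \<in> B)" t
    unfolding t_def using assms approx by (intro delta_approx_ratio_bounded_outcomes) auto
  have "(1 + q) ^ n \<le> real (card ((\<lambda>B. gt_outcome m n M (\<lambda>j. j \<in> B)) ` (Pow {..<n} - {{}})))"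
    using power_card_le_card_outcomes[OF mu _ q(2) large] q(1) t by simp
  also have "\<dots> \<le> 2 ^ m"
    using card_gt_outcome_image_le[of m n M "(\<lambda>B j. j \<in> B) ` (Pow {..<n} - {{}})"]
    by (simp add: image_image)
  finally have "log 2 ((1 + q) ^ n) \<le> log 2 (2 ^ m)"
    using q by (subst log_le_cancel_iff) auto
  then have "real n * log 2 (1 + q) \<le> real m"
    using q by (simp add: log_nat_power)
  moreover have "bin_entropy (1 / \<Delta> ^ 4) - 1 / \<Delta> ^ 2 * bin_entropy (1 / \<Delta> ^ 2) \<le> log 2 (1 + q)"
    using entropy_difference_le_log_weight[OF t] unfolding q_def \<mu>_def t_def by (simp flip: power_mult)
  ultimately show "real m \<ge> real n * (bin_entropy (1 / \<Delta> ^ 4) - 1 / \<Delta> ^ 2 * bin_entropy (1 / \<Delta> ^ 2))"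
    using mult_left_mono[of _ "log 2 (1 + q)" "real n"] by fastforce
qed

end
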